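(* Let $(S,T)$ be a connected triangulated surface (closed or with boundary) with edges $e_1,\dots,e_m$ and admissible metric space $\Omega_u$, and let $\bar{\mathbf w}=(\bar w_1,\dots,\bar w_m)\in\mathbb{R}^m$. Suppose there exists $\bar{\mathbf u}\in\Omega_u$ whose cotangent edge weights are $\bar{\mathbf w}$, i.e. $w_i(\bar{\mathbf u})=\bar w_i$ for all $i$. Then $\bar{\mathbf u}$ is the unique global minimizer on $\Omega_u$ of the energy $$\mathcal{E}(\mathbf u)=\int_{(1,\dots,1)}^{\mathbf u}\sum_{i=1}^m\big(\bar w_i-w_i(\mu)\big)\,d\mu_i,$$ the integral being taken along any piecewise smooth path in $\Omega_u$.
   Context: Admissible metric space: $\Omega_u=\{u\in\mathbb{R}^m_{>0}: \sum_k u_k=m$, and for every face with edges $e_a,e_b,e_c$, $(\sqrt{u_a},\sqrt{u_b},\sqrt{u_c})$ satisfies the strict triangle inequalities$\}$; $u$ corresponds to the Euclidean polyhedral metric with edge lengths $d_k=\sqrt{2u_k}$. $w_i(u)$ is the cotangent edge weight of $e_i$ in that metric: for an interior edge with opposite angles $\alpha,\beta$ in its two adjacent faces, $w_i=\tfrac12(\cot\alpha+\cot\beta)$; for a boundary edge with opposite angle $\alpha$, $w_i=\tfrac12\cot\alpha$. *)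

theory Defs
  imports "HOL-Analysis.Analysis"
begin

text \<open>Edges are the elements of a finite type 'e (so m = CARD('e)), faces the elements of a
  finite type 'f.  The map side f k (k = 0,1,2) gives the edge on the k-th side of face f.\<close>

definition incid :: "('f \<Rightarrow> nat \<Rightarrow> 'e) \<Rightarrow> 'e \<Rightarrow> ('f \<times> nat) set" where
  "incid side i = {(f, k). k < 3 \<and> side f k = i}"

definition triangulated_surface :: "('f::finite \<Rightarrow> nat \<Rightarrow> 'e::finite) \<Rightarrow> bool" where
  "triangulated_surface side \<longleftrightarrow>
     (\<forall>f. distinct [side f 0, side f 1, side f 2]) \<and>
     (\<forall>i. card (incid side i) = 1 \<or> card (incid side i) = 2)"

definition faces_adjacent :: "('f \<Rightarrow> nat \<Rightarrow> 'e) \<Rightarrow> 'f \<Rightarrow> 'f \<Rightarrow> bool" where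
  "faces_adjacent side f g \<longleftrightarrow> (\<exists>k<3. \<exists>l<3. side f k = side g l)"

definition connected_surface :: "('f \<Rightarrow> nat \<Rightarrow> 'e) \<Rightarrow> bool" where
  "connected_surface side \<longleftrightarrow> (\<forall>f g. (faces_adjacent side)\<^sup>*\<^sup>* f g)"

definition strict_triangle :: "real \<Rightarrow> real \<Rightarrow> real \<Rightarrow> bool" where
  "strict_triangle a b c \<longleftrightarrow> a < b + c \<and> b < a + c \<and> c < a + b"

definition Omega_u :: "('f \<Rightarrow> nat \<Rightarrow> 'e::finite) \<Rightarrow> (real^'e) set" where
  "Omega_u side = {u. (\<forall>i. u$i > 0) \<and> (\<Sum>i\<in>UNIV. u$i) = real CARD('e) \<and>
      (\<forall>f. strict_triangle (sqrt (u$side f 0)) (sqrt (u$side f 1)) (sqrt (u$side f 2)))}"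

definition edge_len :: "real^'e \<Rightarrow> 'e \<Rightarrow> real" where
  "edge_len u i = sqrt (2 * u$i)"

definition opp_angle :: "('f \<Rightarrow> nat \<Rightarrow> 'e) \<Rightarrow> real^'e \<Rightarrow> 'f \<Rightarrow> nat \<Rightarrow> real" where
  "opp_angle side u f k =
     (let a = edge_len u (side f k);
          b = edge_len u (side f ((k + 1) mod 3));
          c = edge_len u (side f ((k + 2) mod 3))
      in arccos ((b\<^sup>2 + c\<^sup>2 - a\<^sup>2) / (2 * b * c)))"

definition cot_weight :: "('f::finite \<Rightarrow> nat \<Rightarrow> 'e) \<Rightarrow> real^'e \<Rightarrow> 'e \<Rightarrow> real" where
  "cot_weight side u i = (1/2) * (\<Sum>(f, k)\<in>incid side i. cot (opp_angle side u f k))"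

definition is_energy :: "('f::finite \<Rightarrow> nat \<Rightarrow> 'e::finite) \<Rightarrow> real^'e \<Rightarrow> (real^'e \<Rightarrow> real) \<Rightarrow> bool" where
  "is_energy side wbar E \<longleftrightarrow>
     (\<forall>u\<in>Omega_u side. \<forall>\<gamma>::real \<Rightarrow> real^'e.
        \<gamma> piecewise_C1_differentiable_on {0..1} \<and> \<gamma> ` {0..1} \<subseteq> Omega_u side \<and>
        \<gamma> 0 = vec 1 \<and> \<gamma> 1 = u \<longrightarrow>
        ((\<lambda>t. \<Sum>i\<in>UNIV. (wbar$i - cot_weight side (\<gamma> t) i) * (vector_derivative \<gamma> (at t))$i)
           has_integral E u) {0..1})"

end

theory Submission
  imports Defs
begin

text \<open>
  In the coordinates u = d^2/2 a triangle with values (a, b, c) has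
  cot(angle opposite a) = (b + c - a) / sqrt Q(a,b,c), where Q(a,b,c) = 2(ab+bc+ca) - a^2 - b^2 - c^2
  is Heron's form (Q = 4 area^2).  Q is a Lorentzian quadratic form on R^3, so on its future cone
  the reversed Cauchy-Schwarz inequality  B(x,y) >= sqrt Q(x) sqrt Q(y)  holds for the polar form B,
  with equality only for proportional vectors.  This makes the face pairing
  sum_k (cot_k(x) - cot_k(y)) (y_k - x_k) = (B - sqrt Q(x) sqrt Q(y)) (1/sqrt Q(x) + 1/sqrt Q(y))
  nonnegative; summing over faces, the weight map w is monotone:  <w(x) - w(y), y - x> >= 0,
  and equality forces x, y to be proportional on every face, hence equal (the surface is connected
  and both are normalised by sum u = m).  Since Omega_u is convex, the energy difference along the
  segment from ubar to u is the integral of g(s) = <w(ubar) - w(ubar + s(u - ubar)), u - ubar>,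
  which is nondecreasing with g(0) = 0 and g(1/2) > 0 unless u = ubar.
\<close>

text \<open>Heron's form: for edge data u = d^2/2 of a triangle it equals 4 area^2.\<close>
definition heron_form :: "real \<Rightarrow> real \<Rightarrow> real \<Rightarrow> real" where
  "heron_form a b c = 2*(a*b + b*c + c*a) - a^2 - b^2 - c^2"

text \<open>The symmetric bilinear form with heron_polar x x = heron_form x.\<close>
definition heron_polar :: "real \<Rightarrow> real \<Rightarrow> real \<Rightarrow> real \<Rightarrow> real \<Rightarrow> real \<Rightarrow> real" where
  "heron_polar a0 a1 a2 b0 b1 b2 = (a0 + a1 + a2) * (b0 + b1 + b2) - 2*(a0*b0 + a1*b1 + a2*b2)"

text \<open>Splitting R^3 into the diagonal direction and its orthogonal complement shows that
  Heron's form has signature (1,2): it is (s^2 - 6 N)/3, with s the coordinate sum and N the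
  squared norm of the centred part; M is the inner product of the centred parts.\<close>
lemma heron_lorentz:
  fixes a0 a1 a2 b0 b1 b2 sa sb Na Nb M :: real
  assumes "sa = a0 + a1 + a2" and "sb = b0 + b1 + b2"
    and "Na = (a0 - sa/3)^2 + (a1 - sa/3)^2 + (a2 - sa/3)^2"
    and "Nb = (b0 - sb/3)^2 + (b1 - sb/3)^2 + (b2 - sb/3)^2"
    and "M = (a0 - sa/3)*(b0 - sb/3) + (a1 - sa/3)*(b1 - sb/3) + (a2 - sa/3)*(b2 - sb/3)"
  shows "3 * heron_form a0 a1 a2 = sa^2 - 6*Na"
    and "3 * heron_polar a0 a1 a2 b0 b1 b2 = sa * sb - 6*M"
    and "M^2 \<le> Na*Nb" and "0 \<le> Na"
proof -
  show "3 * heron_form a0 a1 a2 = sa^2 - 6*Na"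
    unfolding heron_form_def assms by (simp add: power2_eq_square field_simps; algebra)
  show "3 * heron_polar a0 a1 a2 b0 b1 b2 = sa * sb - 6*M"
    unfolding heron_polar_def assms by (simp add: power2_eq_square field_simps; algebra)
  show "M^2 \<le> Na*Nb"
    using Cauchy_Schwarz_ineq_sum[of "\<lambda>i. [a0 - sa/3, a1 - sa/3, a2 - sa/3] ! i"
        "\<lambda>i. [b0 - sb/3, b1 - sb/3, b2 - sb/3] ! i" "{0, 1, 2::nat}"]
    unfolding assms(3-5) by (simp add: numeral_2_eq_2 add.assoc)
  show "0 \<le> Na" unfolding assms(3) by simp
qed

lemma heron_polar_pos:
  fixes a0 a1 a2 b0 b1 b2 :: real
  assumes "0 < a0 + a1 + a2" "0 < b0 + b1 + b2"
    and "0 < heron_form a0 a1 a2" "0 < heron_form b0 b1 b2"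
  shows "0 < heron_polar a0 a1 a2 b0 b1 b2"
proof -
  define sa where "sa = a0 + a1 + a2"
  define sb where "sb = b0 + b1 + b2"
  define Na where "Na = (a0 - sa/3)^2 + (a1 - sa/3)^2 + (a2 - sa/3)^2"
  define Nb where "Nb = (b0 - sb/3)^2 + (b1 - sb/3)^2 + (b2 - sb/3)^2"
  define M where "M = (a0 - sa/3)*(b0 - sb/3) + (a1 - sa/3)*(b1 - sb/3) + (a2 - sa/3)*(b2 - sb/3)"
  note L = heron_lorentz[OF sa_def sb_def Na_def Nb_def M_def]
  note Lb = heron_lorentz(1,4)[OF sb_def sb_def Nb_def Nb_def refl]
  have Na: "6*Na < sa^2" using L(1) assms(3) by linarith
  have Nb: "0 \<le> 6*Nb" "6*Nb < sb^2" using Lb assms(4) by linarith+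
  have sa: "0 < sa" and sb: "0 < sb" using assms(1,2) by (simp_all add: sa_def sb_def)
  have "\<bar>6*M\<bar>^2 = 36 * M^2" by (simp add: power2_eq_square)
  also have "\<dots> \<le> (6*Na) * (6*Nb)" using L(3) by simp
  also have "\<dots> < sa^2 * sb^2"
    using Na Nb sa by (intro mult_strict_mono) auto
  also have "\<dots> = (sa * sb)^2" by (simp add: power_mult_distrib)
  finally have "\<bar>6*M\<bar> < sa * sb"
    by (rule power2_less_imp_less) (use sa sb in simp)
  thus ?thesis using L(2) by linarith
qed

text \<open>Bilinearity, in the form needed to project onto the orthogonal complement of a vector.\<close>
lemma heron_form_sub_scaled:
  "heron_form (a0 - c*b0) (a1 - c*b1) (a2 - c*b2)
     = heron_form a0 a1 a2 - 2*c*heron_polar a0 a1 a2 b0 b1 b2 + c^2 * heron_form b0 b1 b2"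
  unfolding heron_form_def heron_polar_def by (simp add: power2_eq_square algebra_simps)

lemma heron_polar_sub_scaled:
  "heron_polar (a0 - c*b0) (a1 - c*b1) (a2 - c*b2) b0 b1 b2
     = heron_polar a0 a1 a2 b0 b1 b2 - c * heron_form b0 b1 b2"
  unfolding heron_form_def heron_polar_def by (simp add: power2_eq_square algebra_simps)

lemma heron_form_nonpos_on_orth:
  fixes v0 v1 v2 b0 b1 b2 :: real
  assumes "0 < heron_form b0 b1 b2" and "heron_polar v0 v1 v2 b0 b1 b2 = 0"
  shows "heron_form v0 v1 v2 \<le> 0"
    and "heron_form v0 v1 v2 = 0 \<Longrightarrow> v0 = 0 \<and> v1 = 0 \<and> v2 = 0"
proof -
  define sv where "sv = v0 + v1 + v2"
  define sb where "sb = b0 + b1 + b2"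
  define Nv where "Nv = (v0 - sv/3)^2 + (v1 - sv/3)^2 + (v2 - sv/3)^2"
  define Nb where "Nb = (b0 - sb/3)^2 + (b1 - sb/3)^2 + (b2 - sb/3)^2"
  define M where "M = (v0 - sv/3)*(b0 - sb/3) + (v1 - sv/3)*(b1 - sb/3) + (v2 - sv/3)*(b2 - sb/3)"
  note L = heron_lorentz[OF sv_def sb_def Nv_def Nb_def M_def]
  note Lb = heron_lorentz(1,4)[OF sb_def sb_def Nb_def Nb_def refl]
  have Nb: "0 \<le> 6*Nb" "6*Nb < sb^2" using Lb assms(1) by linarith+
  have sb: "0 < sb^2" using Nb by linarith
  have orth: "sv * sb = 6*M" using L(2) assms(2) by linarith
  have "sv^2 * sb^2 = (6*M)^2" by (metis orth power_mult_distrib)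
  also have "\<dots> = 36 * M^2" by (simp add: power_mult_distrib)
  also have "\<dots> \<le> (6*Nv) * (6*Nb)" using L(3) by simp
  finally have key: "sv^2 * sb^2 \<le> (6*Nv) * (6*Nb)" .
  have "(6*Nv) * (6*Nb) \<le> (6*Nv) * sb^2" using Nb L(4) by (intro mult_left_mono) auto
  with key have "sv^2 * sb^2 \<le> (6*Nv) * sb^2" by (rule order_trans)
  hence "sv^2 \<le> 6*Nv" using sb by (rule mult_right_le_imp_le)
  thus "heron_form v0 v1 v2 \<le> 0" using L(1) by linarith
  assume "heron_form v0 v1 v2 = 0"
  hence sv: "sv^2 = 6*Nv" using L(1) by linarith
  have "Nv = 0"
  proof (rule ccontr)
    assume "Nv \<noteq> 0"
    hence "0 < 6*Nv" using L(4) by linarith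
    moreover have "(6*Nv) * sb^2 \<le> (6*Nv) * (6*Nb)" using key sv by simp
    ultimately have "sb^2 \<le> 6*Nb" by (rule mult_left_le_imp_le[rotated])
    thus False using Nb by linarith
  qed
  hence "sv = 0" using sv by simp
  have "(v0 - sv/3)^2 = 0" "(v1 - sv/3)^2 = 0" "(v2 - sv/3)^2 = 0"
    using \<open>Nv = 0\<close> unfolding Nv_def
    by (smt (verit) zero_le_power2)+
  thus "v0 = 0 \<and> v1 = 0 \<and> v2 = 0" using \<open>sv = 0\<close> by simp
qed

lemma heron_reverse_cauchy_schwarz:
  fixes a0 a1 a2 b0 b1 b2 :: real
  assumes "0 < heron_form b0 b1 b2"
  shows "heron_form a0 a1 a2 * heron_form b0 b1 b2 \<le> (heron_polar a0 a1 a2 b0 b1 b2)^2"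
    and "heron_form a0 a1 a2 * heron_form b0 b1 b2 = (heron_polar a0 a1 a2 b0 b1 b2)^2
           \<Longrightarrow> \<exists>c. a0 = c*b0 \<and> a1 = c*b1 \<and> a2 = c*b2"
proof -
  define c where "c = heron_polar a0 a1 a2 b0 b1 b2 / heron_form b0 b1 b2"
  have orth: "heron_polar (a0 - c*b0) (a1 - c*b1) (a2 - c*b2) b0 b1 b2 = 0"
    using assms unfolding heron_polar_sub_scaled c_def by simp
  have form: "heron_form (a0 - c*b0) (a1 - c*b1) (a2 - c*b2)
      = (heron_form a0 a1 a2 * heron_form b0 b1 b2 - (heron_polar a0 a1 a2 b0 b1 b2)^2)
          / heron_form b0 b1 b2"
    using assms unfolding heron_form_sub_scaled c_def by (simp add: field_simps power2_eq_square)
  show "heron_form a0 a1 a2 * heron_form b0 b1 b2 \<le> (heron_polar a0 a1 a2 b0 b1 b2)^2"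
    using heron_form_nonpos_on_orth(1)[OF assms orth] assms unfolding form
    by (simp add: divide_le_0_iff)
  assume "heron_form a0 a1 a2 * heron_form b0 b1 b2 = (heron_polar a0 a1 a2 b0 b1 b2)^2"
  hence "heron_form (a0 - c*b0) (a1 - c*b1) (a2 - c*b2) = 0" unfolding form by simp
  hence "a0 - c*b0 = 0 \<and> a1 - c*b1 = 0 \<and> a2 - c*b2 = 0"
    by (rule heron_form_nonpos_on_orth(2)[OF assms orth])
  thus "\<exists>c. a0 = c*b0 \<and> a1 = c*b1 \<and> a2 = c*b2" by auto
qed

lemma heron_polar_ge:
  fixes a0 a1 a2 b0 b1 b2 :: real
  assumes "0 < a0 + a1 + a2" "0 < b0 + b1 + b2"
    and "0 < heron_form a0 a1 a2" "0 < heron_form b0 b1 b2"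
  shows "sqrt (heron_form a0 a1 a2) * sqrt (heron_form b0 b1 b2) \<le> heron_polar a0 a1 a2 b0 b1 b2"
    and "sqrt (heron_form a0 a1 a2) * sqrt (heron_form b0 b1 b2) = heron_polar a0 a1 a2 b0 b1 b2
           \<Longrightarrow> \<exists>c. a0 = c*b0 \<and> a1 = c*b1 \<and> a2 = c*b2"
proof -
  have sq: "(sqrt (heron_form a0 a1 a2) * sqrt (heron_form b0 b1 b2))^2
      = heron_form a0 a1 a2 * heron_form b0 b1 b2"
    using assms(3,4) by (simp add: power_mult_distrib)
  show "sqrt (heron_form a0 a1 a2) * sqrt (heron_form b0 b1 b2) \<le> heron_polar a0 a1 a2 b0 b1 b2"
  proof (rule power2_le_imp_le)
    show "(sqrt (heron_form a0 a1 a2) * sqrt (heron_form b0 b1 b2))^2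
        \<le> (heron_polar a0 a1 a2 b0 b1 b2)^2"
      unfolding sq by (rule heron_reverse_cauchy_schwarz(1)[OF assms(4)])
    show "0 \<le> heron_polar a0 a1 a2 b0 b1 b2"
      using heron_polar_pos[OF assms] by simp
  qed
  assume "sqrt (heron_form a0 a1 a2) * sqrt (heron_form b0 b1 b2) = heron_polar a0 a1 a2 b0 b1 b2"
  hence "heron_form a0 a1 a2 * heron_form b0 b1 b2 = (heron_polar a0 a1 a2 b0 b1 b2)^2"
    using sq by simp
  thus "\<exists>c. a0 = c*b0 \<and> a1 = c*b1 \<and> a2 = c*b2"
    by (rule heron_reverse_cauchy_schwarz(2)[OF assms(4)])
qed

lemma heron_form_pos:
  fixes x0 x1 x2 :: real
  assumes "0 < x0" "0 < x1" "0 < x2" "strict_triangle (sqrt x0) (sqrt x1) (sqrt x2)"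
  shows "0 < heron_form x0 x1 x2"
proof -
  define p0 where "p0 = sqrt x0"
  define p1 where "p1 = sqrt x1"
  define p2 where "p2 = sqrt x2"
  have x: "x0 = p0^2" "x1 = p1^2" "x2 = p2^2" using assms by (auto simp: p0_def p1_def p2_def)
  have p: "0 < p0" "0 < p1" "0 < p2" using assms by (auto simp: p0_def p1_def p2_def)
  have t: "p0 < p1 + p2" "p1 < p0 + p2" "p2 < p0 + p1"
    using assms(4) unfolding strict_triangle_def p0_def p1_def p2_def by auto
  have "heron_form x0 x1 x2 = (p0 + p1 + p2) * ((p1 + p2 - p0) * ((p0 + p2 - p1) * (p0 + p1 - p2)))"
    unfolding x heron_form_def by (simp add: power2_eq_square algebra_simps)
  also have "\<dots> > 0" using p t by (intro mult_pos_pos) auto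
  finally show ?thesis .
qed

lemma Omega_pos: "u \<in> Omega_u side \<Longrightarrow> 0 < u$i"
  unfolding Omega_u_def by auto

lemma Omega_face_sum_pos: "u \<in> Omega_u side \<Longrightarrow> 0 < u$side f 0 + u$side f 1 + u$side f 2"
  using Omega_pos[of u side] by (simp add: add_pos_pos)

lemma Omega_heron_pos: "u \<in> Omega_u side \<Longrightarrow> 0 < heron_form (u$side f 0) (u$side f 1) (u$side f 2)"
  by (rule heron_form_pos) (auto simp: Omega_u_def)

lemma cot_arccos_law_of_cosines:
  fixes a b c :: real
  assumes "0 < b" "0 < c" "0 < heron_form a b c"
  shows "cot (arccos ((b + c - a) / (2 * sqrt (b*c)))) = (b + c - a) / sqrt (heron_form a b c)"
proof -
  define s where "s = (b + c - a) / (2 * sqrt (b*c))"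
  have sbc: "0 < sqrt (b*c)" "(sqrt (b*c))^2 = b*c" using assms by simp_all
  have "1 - s^2 = heron_form a b c / (4*(b*c))"
    unfolding s_def power_divide using sbc assms unfolding heron_form_def
    by (simp add: field_simps power2_eq_square)
  hence e: "1 - s^2 = heron_form a b c / (2 * sqrt (b*c))^2"
    using sbc by (simp add: power_mult_distrib)
  moreover have "0 < heron_form a b c / (2 * sqrt (b*c))^2" using assms(3) sbc(1) by simp
  ultimately have "s^2 < 1" by linarith
  hence "\<bar>s\<bar> < 1" by (simp add: abs_square_less_1)
  hence s1: "-1 \<le> s" "s \<le> 1" by auto
  have "sqrt (1 - s^2) = sqrt (heron_form a b c) / (2 * sqrt (b*c))"
    unfolding e using sbc by (simp add: real_sqrt_divide real_sqrt_mult)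
  hence "cot (arccos s) = s / (sqrt (heron_form a b c) / (2 * sqrt (b*c)))"
    by (simp add: cot_def sin_arccos s1 cos_arccos)
  also have "\<dots> = (b + c - a) / sqrt (heron_form a b c)"
    using sbc(1) assms unfolding s_def by (simp add: divide_divide_eq_left divide_divide_eq_right)
  finally show ?thesis by (simp add: s_def)
qed

lemma cot_opp_angle:
  assumes u: "u \<in> Omega_u side" and k: "k < 3"
  shows "cot (opp_angle side u f k)
      = (u$side f ((k+1) mod 3) + u$side f ((k+2) mod 3) - u$side f k)
          / sqrt (heron_form (u$side f 0) (u$side f 1) (u$side f 2))"
proof -
  define a where "a = u$side f k"
  define b where "b = u$side f ((k+1) mod 3)"
  define c where "c = u$side f ((k+2) mod 3)"
  have pos: "0 < a" "0 < b" "0 < c" using Omega_pos[OF u] by (auto simp: a_def b_def c_def)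
  have Q: "heron_form a b c = heron_form (u$side f 0) (u$side f 1) (u$side f 2)"
  proof -
    have "k = 0 \<or> k = 1 \<or> k = 2" using k by auto
    thus ?thesis unfolding a_def b_def c_def heron_form_def
      by (auto simp: numeral_2_eq_2 algebra_simps)
  qed
  have lengths: "(edge_len u (side f ((k+1) mod 3)))^2 + (edge_len u (side f ((k+2) mod 3)))^2
      - (edge_len u (side f k))^2 = 2 * (b + c - a)"
    using pos by (simp add: edge_len_def a_def b_def c_def)
  have "2 * edge_len u (side f ((k+1) mod 3)) * edge_len u (side f ((k+2) mod 3))
      = 2 * sqrt (4 * (b*c))"
    by (simp add: edge_len_def b_def c_def real_sqrt_mult[symmetric] algebra_simps)
  also have "\<dots> = 2 * (2 * sqrt (b*c))" by (simp add: real_sqrt_mult)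
  finally have prod: "2 * edge_len u (side f ((k+1) mod 3)) * edge_len u (side f ((k+2) mod 3))
      = 2 * (2 * sqrt (b*c))" .
  have "opp_angle side u f k = arccos ((b + c - a) / (2 * sqrt (b*c)))"
    unfolding opp_angle_def Let_def lengths prod mult_divide_mult_cancel_left_if by simp
  also have "cot \<dots> = (b + c - a) / sqrt (heron_form a b c)"
    using cot_arccos_law_of_cosines pos Q Omega_heron_pos[OF u] by simp
  finally show ?thesis using Q by (simp add: a_def b_def c_def)
qed

lemma cot_pairing_identity:
  fixes a0 a1 a2 b0 b1 b2 qa qb :: real
  assumes "0 < qa" "0 < qb" "qa^2 = heron_form a0 a1 a2" "qb^2 = heron_form b0 b1 b2"
  shows "((a1 + a2 - a0)/qa - (b1 + b2 - b0)/qb) * (b0 - a0)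
       + ((a2 + a0 - a1)/qa - (b2 + b0 - b1)/qb) * (b1 - a1)
       + ((a0 + a1 - a2)/qa - (b0 + b1 - b2)/qb) * (b2 - a2)
       = (heron_polar a0 a1 a2 b0 b1 b2 - qa*qb) * (1/qa + 1/qb)"
proof -
  have "((a1 + a2 - a0)/qa - (b1 + b2 - b0)/qb) * (b0 - a0)
       + ((a2 + a0 - a1)/qa - (b2 + b0 - b1)/qb) * (b1 - a1)
       + ((a0 + a1 - a2)/qa - (b0 + b1 - b2)/qb) * (b2 - a2)
       = heron_polar a0 a1 a2 b0 b1 b2 / qa - heron_form a0 a1 a2 / qa
         - heron_form b0 b1 b2 / qb + heron_polar a0 a1 a2 b0 b1 b2 / qb"
    using assms(1,2) unfolding heron_form_def heron_polar_def
    by (simp add: field_simps power2_eq_square)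
  also have "\<dots> = (heron_polar a0 a1 a2 b0 b1 b2 - qa*qb) * (1/qa + 1/qb)"
    using assms by (simp flip: assms(3,4) add: field_simps power2_eq_square)
  finally show ?thesis .
qed

definition face_pairing :: "('f \<Rightarrow> nat \<Rightarrow> 'e) \<Rightarrow> real^'e \<Rightarrow> real^'e \<Rightarrow> 'f \<Rightarrow> real" where
  "face_pairing side x y f =
     (\<Sum>k<3. (cot (opp_angle side x f k) - cot (opp_angle side y f k)) * (y$side f k - x$side f k))"

lemma face_pairing_monotone:
  assumes x: "x \<in> Omega_u side" and y: "y \<in> Omega_u side"
  shows "0 \<le> face_pairing side x y f"
    and "face_pairing side x y f = 0 \<Longrightarrow> \<exists>c. \<forall>k<3. x$side f k = c * y$side f k"
proof -
  define qx where "qx = sqrt (heron_form (x$side f 0) (x$side f 1) (x$side f 2))"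
  define qy where "qy = sqrt (heron_form (y$side f 0) (y$side f 1) (y$side f 2))"
  define B where "B = heron_polar (x$side f 0) (x$side f 1) (x$side f 2) (y$side f 0) (y$side f 1) (y$side f 2)"
  have q: "0 < qx" "0 < qy" "qx^2 = heron_form (x$side f 0) (x$side f 1) (x$side f 2)"
      "qy^2 = heron_form (y$side f 0) (y$side f 1) (y$side f 2)"
    using Omega_heron_pos[OF x, of f] Omega_heron_pos[OF y, of f] by (simp_all add: qx_def qy_def)
  have cots: "cot (opp_angle side u f 0) = (u$side f 1 + u$side f 2 - u$side f 0) / qu"
      "cot (opp_angle side u f 1) = (u$side f 2 + u$side f 0 - u$side f 1) / qu"
      "cot (opp_angle side u f 2) = (u$side f 0 + u$side f 1 - u$side f 2) / qu"
    if "u \<in> Omega_u side" "qu = sqrt (heron_form (u$side f 0) (u$side f 1) (u$side f 2))" for u qu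
    using cot_opp_angle[OF that(1), of 0 f] cot_opp_angle[OF that(1), of 1 f]
      cot_opp_angle[OF that(1), of 2 f] that(2) by (simp_all add: numeral_2_eq_2)
  have "face_pairing side x y f
      = (cot (opp_angle side x f 0) - cot (opp_angle side y f 0)) * (y$side f 0 - x$side f 0)
      + (cot (opp_angle side x f 1) - cot (opp_angle side y f 1)) * (y$side f 1 - x$side f 1)
      + (cot (opp_angle side x f 2) - cot (opp_angle side y f 2)) * (y$side f 2 - x$side f 2)"
    unfolding face_pairing_def by (simp add: numeral_3_eq_3 numeral_2_eq_2)
  also have "\<dots> = (B - qx*qy) * (1/qx + 1/qy)"
    unfolding cots[OF x qx_def] cots[OF y qy_def] B_def by (rule cot_pairing_identity[OF q])
  finally have "face_pairing side x y f = (B - qx*qy) * (1/qx + 1/qy)" .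
  moreover have "0 < 1/qx + 1/qy" using q(1,2) by (simp add: add_pos_pos)
  moreover note polar = heron_polar_ge[OF Omega_face_sum_pos[OF x, of f] Omega_face_sum_pos[OF y, of f]
      Omega_heron_pos[OF x, of f] Omega_heron_pos[OF y, of f], folded qx_def qy_def B_def]
  ultimately show "0 \<le> face_pairing side x y f" by simp
  assume "face_pairing side x y f = 0"
  with \<open>0 < 1/qx + 1/qy\<close> \<open>face_pairing side x y f = (B - qx*qy) * (1/qx + 1/qy)\<close>
  have "qx * qy = B" by simp
  then obtain c where "x$side f 0 = c * y$side f 0" "x$side f 1 = c * y$side f 1"
      "x$side f 2 = c * y$side f 2"
    using polar(2) by blast
  moreover have "k < 3 \<Longrightarrow> k = 0 \<or> k = 1 \<or> k = 2" for k :: nat by auto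
  ultimately show "\<exists>c. \<forall>k<3. x$side f k = c * y$side f k" by metis
qed

lemma sum_over_incidences:
  fixes side :: "'f::finite \<Rightarrow> nat \<Rightarrow> 'e::finite" and h :: "'f \<times> nat \<Rightarrow> real"
  shows "(\<Sum>i\<in>UNIV. \<Sum>p\<in>incid side i. h p) = (\<Sum>f\<in>UNIV. \<Sum>k<3. h (f, k))"
proof -
  have "incid side i = {p \<in> UNIV \<times> {..<3}. side (fst p) (snd p) = i}" for i
    unfolding incid_def by auto
  hence "(\<Sum>i\<in>UNIV. \<Sum>p\<in>incid side i. h p) = (\<Sum>p\<in>UNIV \<times> {..<3}. h p)"
    by (simp add: sum.group)
  also have "\<dots> = (\<Sum>f\<in>UNIV. \<Sum>k<3. h (f, k))"
    by (simp add: sum.cartesian_product)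
  finally show ?thesis .
qed

lemma weight_pairing_by_faces:
  fixes side :: "'f::finite \<Rightarrow> nat \<Rightarrow> 'e::finite"
  shows "(\<Sum>i\<in>UNIV. (cot_weight side x i - cot_weight side y i) * (y$i - x$i))
       = 1/2 * (\<Sum>f\<in>UNIV. face_pairing side x y f)"
proof -
  define h where "h = (\<lambda>(f, k). (cot (opp_angle side x f k) - cot (opp_angle side y f k))
                                 * (y$side f k - x$side f k))"
  have edge: "(cot_weight side x i - cot_weight side y i) * (y$i - x$i)
      = 1/2 * (\<Sum>p\<in>incid side i. h p)" for i
  proof -
    have "(\<Sum>p\<in>incid side i. h p)
        = (\<Sum>(f, k)\<in>incid side i. cot (opp_angle side x f k) - cot (opp_angle side y f k)) * (y$i - x$i)"
      unfolding sum_distrib_right by (rule sum.cong) (auto simp: h_def incid_def)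
    also have "\<dots> = 2 * (cot_weight side x i - cot_weight side y i) * (y$i - x$i)"
      unfolding cot_weight_def by (simp add: sum_subtractf case_prod_beta)
    finally show ?thesis by simp
  qed
  show ?thesis
    unfolding edge sum_distrib_left[symmetric] sum_over_incidences
    by (simp add: face_pairing_def h_def)
qed

lemma cot_weight_monotone:
  assumes "x \<in> Omega_u side" and "y \<in> Omega_u side"
  shows "0 \<le> (\<Sum>i\<in>UNIV. (cot_weight side x i - cot_weight side y i) * (y$i - x$i))"
  unfolding weight_pairing_by_faces using face_pairing_monotone(1)[OF assms] by (simp add: sum_nonneg)

text \<open>On a connected triangulated surface, face-wise proportional normalised metrics coincide:
  adjacent faces share an edge, so the scaling factor is locally and hence globally constant,
  and the normalisation fixes it to 1.\<close>
lemma faces_proportional_imp_eq: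
  fixes side :: "'f::finite \<Rightarrow> nat \<Rightarrow> 'e::finite"
  assumes ts: "triangulated_surface side" and cs: "connected_surface side"
    and x: "x \<in> Omega_u side" and y: "y \<in> Omega_u side"
    and proportional: "\<And>f. \<exists>c. \<forall>k<3. x$side f k = c * y$side f k"
  shows "x = y"
proof -
  obtain c where c: "\<And>f k. k < 3 \<Longrightarrow> x$side f k = c f * y$side f k"
    using proportional by metis
  have adjacent: "c f = c g" if adj: "faces_adjacent side f g" for f g
  proof -
    obtain k l where kl: "k < 3" "l < 3" "side f k = side g l"
      using adj unfolding faces_adjacent_def by blast
    have "c f * y$side f k = c g * y$side f k"
      using c[OF kl(1), of f] c[OF kl(2), of g] unfolding kl(3) by auto
    thus ?thesis using Omega_pos[OF y, of "side f k"] by auto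
  qed
  fix f0 :: 'f
  have const: "c g = c f0" for g
  proof -
    have "(faces_adjacent side)\<^sup>*\<^sup>* f0 g" using cs unfolding connected_surface_def by blast
    thus ?thesis by (induction rule: rtranclp_induct) (simp_all add: adjacent)
  qed
  have scaled: "x$i = c f0 * y$i" for i
  proof -
    have "card (incid side i) \<noteq> 0" using ts unfolding triangulated_surface_def by (metis zero_neq_one zero_neq_numeral)
    hence "incid side i \<noteq> {}" by auto
    then obtain f k where "k < 3" "side f k = i" unfolding incid_def by auto
    thus ?thesis using c[of k f] const[of f] by simp
  qed
  have "(\<Sum>i\<in>UNIV. x$i) = c f0 * (\<Sum>i\<in>UNIV. y$i)" by (simp add: scaled sum_distrib_left)
  moreover have "(\<Sum>i\<in>UNIV. x$i) = real CARD('e)" "(\<Sum>i\<in>UNIV. y$i) = real CARD('e)"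
    using x y unfolding Omega_u_def by auto
  ultimately have "c f0 = 1" by simp
  thus ?thesis using scaled by (simp add: vec_eq_iff)
qed

lemma cot_weight_strictly_monotone:
  fixes side :: "'f::finite \<Rightarrow> nat \<Rightarrow> 'e::finite"
  assumes "triangulated_surface side" and "connected_surface side"
    and x: "x \<in> Omega_u side" and y: "y \<in> Omega_u side"
    and "(\<Sum>i\<in>UNIV. (cot_weight side x i - cot_weight side y i) * (y$i - x$i)) = 0"
  shows "x = y"
proof (rule faces_proportional_imp_eq[OF assms(1-4)])
  have "(\<Sum>f\<in>UNIV. face_pairing side x y f) = 0"
    using assms(5) unfolding weight_pairing_by_faces by simp
  hence "face_pairing side x y f = 0" for f
    using sum_nonneg_eq_0_iff[of UNIV "face_pairing side x y"] face_pairing_monotone(1)[OF x y] by simp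
  thus "\<exists>c. \<forall>k<3. x$side f k = c * y$side f k" for f
    by (rule face_pairing_monotone(2)[OF x y])
qed

text \<open>The weighted L2 combination of two strict triangle inequalities is again strict
  (triangle inequality for the Euclidean norm in R^2).\<close>
lemma sqrt_weighted_triangle:
  fixes a b pa pb pc qa qb qc :: real
  assumes "0 \<le> a" "0 \<le> b" "a + b = 1" "0 \<le> pa" "0 \<le> qa"
    and "pa < pb + pc" "qa < qb + qc"
  shows "sqrt (a*pa^2 + b*qa^2) < sqrt (a*pb^2 + b*qb^2) + sqrt (a*pc^2 + b*qc^2)"
proof -
  define A where "A = sqrt a * pb"
  define B where "B = sqrt b * qb"
  define C where "C = sqrt a * pc"
  define D where "D = sqrt b * qc"
  have AB: "A^2 + B^2 = a*pb^2 + b*qb^2" "C^2 + D^2 = a*pc^2 + b*qc^2"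
    using assms by (simp_all add: A_def B_def C_def D_def power_mult_distrib)
  have mono_a: "(sqrt a * pa)^2 \<le> (A + C)^2" and mono_b: "(sqrt b * qa)^2 \<le> (B + D)^2"
    unfolding A_def B_def C_def D_def using assms
    by (auto intro!: power_mono simp flip: distrib_left intro: mult_left_mono)
  have "(sqrt a * pa)^2 < (A + C)^2 \<or> (sqrt b * qa)^2 < (B + D)^2"
  proof (cases "0 < a")
    case True
    hence "sqrt a * pa < sqrt a * (pb + pc)" using assms by simp
    hence "(sqrt a * pa)^2 < (A + C)^2" unfolding A_def C_def using assms
      by (intro power_strict_mono) (auto simp: algebra_simps)
    thus ?thesis ..
  next
    case False
    hence "0 < b" using assms by simp
    hence "sqrt b * qa < sqrt b * (qb + qc)" using assms by simp
    hence "(sqrt b * qa)^2 < (B + D)^2" unfolding B_def D_def using assms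
      by (intro power_strict_mono) (auto simp: algebra_simps)
    thus ?thesis ..
  qed
  hence "a*pa^2 + b*qa^2 < (A + C)^2 + (B + D)^2"
    using mono_a mono_b assms(1,2) by (simp add: power_mult_distrib, linarith)
  hence "sqrt (a*pa^2 + b*qa^2) < sqrt ((A + C)^2 + (B + D)^2)" by simp
  also have "\<dots> \<le> sqrt (A^2 + B^2) + sqrt (C^2 + D^2)" by (rule real_sqrt_sum_squares_triangle_ineq)
  finally show ?thesis unfolding AB .
qed

lemma strict_triangle_convex_comb:
  fixes a b :: real
  assumes ab: "0 \<le> a" "0 \<le> b" "a + b = 1"
    and pos: "0 \<le> x0" "0 \<le> x1" "0 \<le> x2" "0 \<le> y0" "0 \<le> y1" "0 \<le> y2"
    and "strict_triangle (sqrt x0) (sqrt x1) (sqrt x2)" "strict_triangle (sqrt y0) (sqrt y1) (sqrt y2)"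
  shows "strict_triangle (sqrt (a*x0 + b*y0)) (sqrt (a*x1 + b*y1)) (sqrt (a*x2 + b*y2))"
proof -
  have side: "sqrt (a*xa + b*ya) < sqrt (a*xb + b*yb) + sqrt (a*xc + b*yc)"
    if "0 \<le> xa" "0 \<le> xb" "0 \<le> xc" "0 \<le> ya" "0 \<le> yb" "0 \<le> yc"
      "sqrt xa < sqrt xb + sqrt xc" "sqrt ya < sqrt yb + sqrt yc" for xa xb xc ya yb yc
    using sqrt_weighted_triangle[OF ab, of "sqrt xa" "sqrt ya" "sqrt xb" "sqrt xc" "sqrt yb" "sqrt yc"] that
    by simp
  show ?thesis using assms(10,11) pos unfolding strict_triangle_def
    by (auto intro!: side simp: add.commute)
qed

text \<open>The admissible metric space is convex, so segments in it are admissible paths.\<close>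
lemma Omega_convex: "convex (Omega_u (side :: 'f \<Rightarrow> nat \<Rightarrow> 'e::finite))"
proof (rule convexI)
  fix x y :: "real^'e" and a b :: real
  assume x: "x \<in> Omega_u side" and y: "y \<in> Omega_u side" and ab: "0 \<le> a" "0 \<le> b" "a + b = 1"
  have "0 < (a *\<^sub>R x + b *\<^sub>R y)$i" for i
    using Omega_pos[OF x, of i] Omega_pos[OF y, of i] ab
    by (cases "a = 0") (auto intro: add_pos_nonneg)
  moreover have "(\<Sum>i\<in>UNIV. (a *\<^sub>R x + b *\<^sub>R y)$i) = real CARD('e)"
  proof -
    have "(\<Sum>i\<in>UNIV. (a *\<^sub>R x + b *\<^sub>R y)$i) = a * (\<Sum>i\<in>UNIV. x$i) + b * (\<Sum>i\<in>UNIV. y$i)"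
      by (simp add: sum.distrib sum_distrib_left)
    also have "\<dots> = (a + b) * real CARD('e)" using x y by (simp add: Omega_u_def distrib_right)
    finally show ?thesis using ab by simp
  qed
  moreover have "strict_triangle (sqrt ((a *\<^sub>R x + b *\<^sub>R y)$side f 0))
      (sqrt ((a *\<^sub>R x + b *\<^sub>R y)$side f 1)) (sqrt ((a *\<^sub>R x + b *\<^sub>R y)$side f 2))" for f
    using strict_triangle_convex_comb[OF ab] x y Omega_pos[OF x] Omega_pos[OF y]
    by (simp add: Omega_u_def less_imp_le)
  ultimately show "a *\<^sub>R x + b *\<^sub>R y \<in> Omega_u side"
    unfolding Omega_u_def by blast
qed

lemma linepath_in_Omega:
  assumes "a \<in> Omega_u side" "b \<in> Omega_u side" "s \<in> {0..1}"
  shows "linepath a b s \<in> Omega_u side"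
  using closed_segment_subset[OF assms(1,2) Omega_convex] assms(3)
  by (metis image_eqI linepath_image_01 subsetD)

lemma vec_one_in_Omega: "(vec 1 :: real^'e::finite) \<in> Omega_u side"
  unfolding Omega_u_def strict_triangle_def by simp

text \<open>Monotonicity is the monotonicity of w
  applied to two points of the segment.\<close>
lemma segment_weight_pairing:
  fixes side :: "'f::finite \<Rightarrow> nat \<Rightarrow> 'e::finite"
  assumes ts: "triangulated_surface side" and cs: "connected_surface side"
    and v: "v \<in> Omega_u side" and u: "u \<in> Omega_u side"
  defines "g \<equiv> \<lambda>s. \<Sum>i\<in>UNIV. (cot_weight side v i - cot_weight side (linepath v u s) i) * (u - v)$i"
  shows "mono_on {0..1} g" and "g 0 = 0" and "u \<noteq> v \<Longrightarrow> 0 < g (1/2)"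
proof -
  let ?p = "linepath v u"
  have step: "?p s - ?p s' = (s - s') *\<^sub>R (u - v)" for s s'
    unfolding linepath_def by (simp add: algebra_simps)
  have gdiff: "(s - s') * (g s - g s')
      = (\<Sum>i\<in>UNIV. (cot_weight side (?p s') i - cot_weight side (?p s) i) * (?p s - ?p s')$i)" for s s'
    unfolding step g_def by (simp add: sum_subtractf[symmetric] sum_distrib_left algebra_simps)
  show g0: "g 0 = 0" unfolding g_def by (simp add: linepath_def)
  have mono: "g s' \<le> g s" if "s' \<in> {0..1}" "s \<in> {0..1}" "s' \<le> s" for s s'
  proof (cases "s' = s")
    case False
    have "0 \<le> (s - s') * (g s - g s')" unfolding gdiff vector_minus_component
      by (rule cot_weight_monotone) (use linepath_in_Omega[OF v u] that in auto)
    thus ?thesis using that False by (simp add: zero_le_mult_iff)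
  qed simp
  thus "mono_on {0..1} g" by (auto intro: mono_onI)
  assume "u \<noteq> v"
  have "0 \<le> g (1/2)" using mono[of 0 "1/2"] g0 by simp
  moreover have "g (1/2) \<noteq> 0"
  proof
    assume "g (1/2) = 0"
    hence "(\<Sum>i\<in>UNIV. (cot_weight side (?p 0) i - cot_weight side (?p (1/2)) i) * (?p (1/2) - ?p 0)$i) = 0"
      using gdiff[of "1/2" 0] g0 by simp
    moreover have "?p 0 \<in> Omega_u side" "?p (1/2) \<in> Omega_u side"
      using linepath_in_Omega[OF v u] by auto
    ultimately have "?p 0 = ?p (1/2)"
      using cot_weight_strictly_monotone[OF ts cs] unfolding vector_minus_component by blast
    hence "(1/2::real) *\<^sub>R (u - v) = 0" using step[of "1/2" 0] by simp
    thus False using \<open>u \<noteq> v\<close> by simp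
  qed
  ultimately show "0 < g (1/2)" by simp
qed

lemma has_integral_pos_of_mono:
  fixes g :: "real \<Rightarrow> real"
  assumes int: "(g has_integral J) {0..1}" and mono: "mono_on {0..1} g" and g0: "0 \<le> g 0"
  shows "0 \<le> J" and "0 < g (1/2) \<Longrightarrow> 0 < J"
proof -
  have nonneg: "0 \<le> g s" if "s \<in> {0..1}" for s
    using mono_onD[OF mono, of 0 s] that g0 by auto
  show "0 \<le> J" using has_integral_nonneg[OF int] nonneg by auto
  assume pos: "0 < g (1/2)"
  have "g integrable_on {0..1/2}" "g integrable_on {1/2..1}"
    using integrable_subinterval_real[OF has_integral_integrable[OF int]] by auto
  then obtain K1 K2 where K1: "(g has_integral K1) {0..1/2}" and K2: "(g has_integral K2) {1/2..1}"
    by (auto simp: integrable_on_def)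
  have "J = K1 + K2"
    using has_integral_combine[of 0 "1/2" 1 g K1 K2] K1 K2 int by (auto dest: has_integral_unique)
  moreover have "0 \<le> K1" using has_integral_nonneg[OF K1] nonneg by auto
  moreover have "(1/2) * g (1/2) \<le> K2"
    using has_integral_le[OF has_integral_const_real[of "g (1/2)" "1/2" 1] K2]
      mono_onD[OF mono, of "1/2"] by simp
  ultimately show "0 < J" using pos by simp
qed

lemma vector_derivative_join_linepaths:
  fixes a b c :: "'a::real_normed_vector"
  shows "t \<in> {0<..<1/2} \<Longrightarrow> vector_derivative (linepath a b +++ linepath b c) (at t) = 2 *\<^sub>R (b - a)"
    and "t \<in> {1/2<..<1} \<Longrightarrow> vector_derivative (linepath a b +++ linepath b c) (at t) = 2 *\<^sub>R (c - b)"
proof -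
  have rescaled: "((\<lambda>s. linepath p q (2 * s + d)) has_vector_derivative 2 *\<^sub>R (q - p)) (at t)"
    for p q :: 'a and d
    unfolding linepath_def by (auto intro!: derivative_eq_intros simp: algebra_simps)
  show "vector_derivative (linepath a b +++ linepath b c) (at t) = 2 *\<^sub>R (b - a)"
    if "t \<in> {0<..<1/2}"
    by (rule vector_derivative_at, rule has_vector_derivative_transform_within_open
        [OF rescaled[of a b 0], where S = "{..<1/2}"]) (use that in \<open>auto simp: joinpaths_def\<close>)
  show "vector_derivative (linepath a b +++ linepath b c) (at t) = 2 *\<^sub>R (c - b)"
    if "t \<in> {1/2<..<1}"
    by (rule vector_derivative_at, rule has_vector_derivative_transform_within_open
        [OF rescaled[of b c "-1"], where S = "{1/2<..}"]) (use that in \<open>auto simp: joinpaths_def\<close>)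
qed

lemma has_integral_rescale_half:
  fixes f :: "real \<Rightarrow> real"
  shows "((\<lambda>t. 2 * f (2 * t - c)) has_integral I) {c/2..(1 + c)/2} \<longleftrightarrow> (f has_integral I) {0..1}"
proof -
  have "((\<lambda>t. 2 * f (2 *\<^sub>R t + - c)) has_integral ((2 * I) /\<^sub>R 2 ^ DIM(real)))
          (cbox ((0 - - c) /\<^sub>R 2) ((1 - - c) /\<^sub>R 2))
        \<longleftrightarrow> ((\<lambda>s. 2 * f s) has_integral (2 * I)) (cbox 0 1)"
    by (rule has_integral_affinity_iff) simp
  moreover have "((\<lambda>s. 2 * f s) has_integral (2 * I)) {0..1} \<longleftrightarrow> (f has_integral I) {0..1}"
    using has_integral_mult_right_iff[of "2::real" f "2 * I" "{0..1}"] by simp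
  ultimately show ?thesis by (simp add: add.commute)
qed

lemma has_integral_concatenation:
  fixes f g1 g2 :: "real \<Rightarrow> real"
  assumes whole: "(f has_integral I) {0..1}" and first: "(g1 has_integral I1) {0..1}"
    and left: "\<And>t. t \<in> {0<..<1/2} \<Longrightarrow> f t = 2 * g1 (2 * t)"
    and right: "\<And>t. t \<in> {1/2<..<1} \<Longrightarrow> f t = 2 * g2 (2 * t - 1)"
  shows "(g2 has_integral (I - I1)) {0..1}"
proof -
  have "((\<lambda>t. 2 * g1 (2 * t)) has_integral I1) {0..1/2}"
    using has_integral_rescale_half[of g1 0 I1] first by simp
  hence left_half: "(f has_integral I1) {0..1/2}"
    by (rule has_integral_spike_finite[where S = "{0, 1/2::real}", rotated 2]) (use left in auto)
  have "f integrable_on {1/2..1}"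
    by (rule integrable_subinterval_real[OF has_integral_integrable[OF whole]]) auto
  then obtain J where right_half: "(f has_integral J) {1/2..1}"
    unfolding integrable_on_def by blast
  have "(f has_integral (I1 + J)) {0..1}"
    by (rule has_integral_combine[of 0 "1/2" 1, OF _ _ left_half right_half]) auto
  hence "I = I1 + J" using whole by (rule has_integral_unique[symmetric])
  moreover have "((\<lambda>t. 2 * g2 (2 * t - 1)) has_integral J) {1/2..1}"
    by (rule has_integral_spike_finite[where S = "{1/2, 1::real}", rotated 2, OF right_half])
       (use right in auto)
  hence "(g2 has_integral J) {0..1}"
    using has_integral_rescale_half[of g2 1 J] by simp
  ultimately show ?thesis by simp
qed

text \<open>Path independence of the energy turns energy differences into integrals along segments:
  compare the segment from (1,...,1) to v with its concatenation with the segment from v to u.\<close>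
lemma energy_difference_along_segment:
  fixes side :: "'f::finite \<Rightarrow> nat \<Rightarrow> 'e::finite"
  assumes energy: "is_energy side wbar E"
    and v: "v \<in> Omega_u side" and u: "u \<in> Omega_u side"
  shows "((\<lambda>s. \<Sum>i\<in>UNIV. (wbar$i - cot_weight side (linepath v u s) i) * (u - v)$i)
           has_integral (E u - E v)) {0..1}"
proof -
  define F where "F = (\<lambda>\<gamma> t. \<Sum>i\<in>UNIV. (wbar$i - cot_weight side (\<gamma> t) i) * (vector_derivative \<gamma> (at t))$i)"
  define G where "G = (\<lambda>a b s. \<Sum>i\<in>UNIV. (wbar$i - cot_weight side (linepath a b s) i) * (b - a)$i)"
  have path_integral: "(F \<gamma> has_integral E x) {0..1}"
    if "valid_path \<gamma>" "path_image \<gamma> \<subseteq> Omega_u side" "pathstart \<gamma> = vec 1" "pathfinish \<gamma> = x"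
      "x \<in> Omega_u side" for \<gamma> x
    using energy that unfolding is_energy_def F_def valid_path_def path_image_def pathstart_def pathfinish_def
    by blast
  have segment: "path_image (linepath a b) \<subseteq> Omega_u side" if "a \<in> Omega_u side" "b \<in> Omega_u side" for a b
    using linepath_in_Omega[OF that] by (auto simp: path_image_def)
  define \<gamma> where "\<gamma> = linepath (vec 1) v +++ linepath v u"
  have "(F (linepath (vec 1) v) has_integral E v) {0..1}"
    by (rule path_integral[OF _ segment[OF vec_one_in_Omega v]]) (simp_all add: v)
  moreover have "F (linepath (vec 1) v) = G (vec 1) v"
    by (simp add: F_def G_def vector_derivative_linepath_at fun_eq_iff)
  ultimately have first: "(G (vec 1) v has_integral E v) {0..1}" by simp
  have "valid_path \<gamma>" unfolding \<gamma>_def by (rule valid_path_join) auto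
  moreover have "path_image \<gamma> \<subseteq> Omega_u side"
    using path_image_join_subset segment[OF vec_one_in_Omega v] segment[OF v u]
    unfolding \<gamma>_def by blast
  ultimately have whole: "(F \<gamma> has_integral E u) {0..1}"
    by (rule path_integral) (simp_all add: \<gamma>_def u)
  have left: "F \<gamma> t = 2 * G (vec 1) v (2 * t)" if t: "t \<in> {0<..<1/2}" for t
  proof -
    have deriv: "vector_derivative \<gamma> (at t) = 2 *\<^sub>R (v - vec 1)"
      unfolding \<gamma>_def by (rule vector_derivative_join_linepaths(1)[OF t])
    have point: "\<gamma> t = linepath (vec 1) v (2 * t)" using t by (simp add: \<gamma>_def joinpaths_def)
    show ?thesis unfolding F_def G_def deriv point by (simp add: sum_distrib_left algebra_simps)
  qed
  have right: "F \<gamma> t = 2 * G v u (2 * t - 1)" if t: "t \<in> {1/2<..<1}" for t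
  proof -
    have deriv: "vector_derivative \<gamma> (at t) = 2 *\<^sub>R (u - v)"
      unfolding \<gamma>_def by (rule vector_derivative_join_linepaths(2)[OF t])
    have point: "\<gamma> t = linepath v u (2 * t - 1)" using t by (simp add: \<gamma>_def joinpaths_def)
    show ?thesis unfolding F_def G_def deriv point by (simp add: sum_distrib_left algebra_simps)
  qed
  show ?thesis using has_integral_concatenation[OF whole first left right] by (simp add: G_def)
qed

text \<open>Main theorem: along the segment from ubar to u the energy grows by the integral of the
  nondecreasing function g with g(0) = 0, which is positive unless u = ubar.\<close>
theorem theorem5:
  fixes side :: "'f::finite \<Rightarrow> nat \<Rightarrow> 'e::finite"
    and wbar ubar :: "real^'e"
    and E :: "real^'e \<Rightarrow> real"
  assumes "triangulated_surface side"
    and "connected_surface side"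
    and "ubar \<in> Omega_u side"
    and "\<forall>i. cot_weight side ubar i = wbar$i"
    and "is_energy side wbar E"
  shows "(\<forall>u\<in>Omega_u side. E ubar \<le> E u) \<and>
         (\<forall>u\<in>Omega_u side. E u \<le> E ubar \<longrightarrow> u = ubar)"
proof -
  have gain: "E ubar \<le> E u \<and> (u \<noteq> ubar \<longrightarrow> E ubar < E u)" if u: "u \<in> Omega_u side" for u
  proof -
    define g where "g = (\<lambda>s. \<Sum>i\<in>UNIV.
        (cot_weight side ubar i - cot_weight side (linepath ubar u s) i) * (u - ubar)$i)"
    have "(g has_integral (E u - E ubar)) {0..1}"
      using energy_difference_along_segment[OF assms(5,3) u] assms(4) by (simp add: g_def)
    moreover have "mono_on {0..1} g" and "g 0 = 0" and "u \<noteq> ubar \<Longrightarrow> 0 < g (1/2)"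
      unfolding g_def by (fact segment_weight_pairing[OF assms(1-3) u])+
    ultimately show ?thesis using has_integral_pos_of_mono[of g "E u - E ubar"] by auto
  qed
  thus ?thesis by force
qed

end
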